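(* In the setting below, suppose $p\geq5$. Then for all distinct $i,j,k\in\mathbb Z/N\mathbb Z$ we have $\#(P_{ij}\cap P_{jk})\geq2$.
   Context: Setting: $p,q$ distinct primes, $N=p+q$; $M=(m_{ik})_{i,k\in\mathbb Z/N\mathbb Z}$ has entries in $\mathbb Z/pq\mathbb Z$ and $(e^{2\pi i\,m_{ik}/pq})$ is a complex Hadamard matrix (unimodular entries, orthogonal rows). $L_i(k)=m_{ik}$, $L_{ij}=L_j-L_i$. For $d\mid pq$, $d(\mathbb Z/pq\mathbb Z)$ is the subgroup of multiples of $d$. For distinct $i,j$ there is a partition $\mathbb Z/N\mathbb Z=P_{ij}\sqcup Q_{ij}\sqcup R_{ij}$ and $r\in\mathbb Z/pq\mathbb Z$ with: $\#R_{ij}=2$ and $L_{ij}\equiv r$ on $R_{ij}$; $\#P_{ij}=p-1$ and $L_{ij}(P_{ij})=(r+q(\mathbb Z/pq\mathbb Z))\setminus\{r\}$; $\#Q_{ij}=q-1$ and $L_{ij}(Q_{ij})=(r+p(\mathbb Z/pq\mathbb Z))\setminus\{r\}$. This partition is unique ($R_{ij}$ is the pair of indices where $L_{ij}$ takes its unique repeated value). Put $P^+_{ij}=P_{ij}\cup R_{ij}$, $Q^+_{ij}=Q_{ij}\cup R_{ij}$. *)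

theory Defs
  imports Complex_Main "HOL-Computational_Algebra.Primes"
begin

text \<open>Indices of Z/NZ are represented by {..<N}; entries of Z/pqZ by integers in {0..<p*q}.\<close>

definition hadamard_exp :: "nat \<Rightarrow> nat \<Rightarrow> nat \<Rightarrow> (nat \<Rightarrow> nat \<Rightarrow> int) \<Rightarrow> bool" where
  "hadamard_exp p q N m \<longleftrightarrow>
     (\<forall>i<N. \<forall>k<N. m i k \<in> {0..<int (p*q)}) \<and>
     (\<forall>i<N. \<forall>j<N. i \<noteq> j \<longrightarrow>
        (\<Sum>k<N. cis (2 * pi * real_of_int (m i k - m j k) / real (p*q))) = 0)"

definition Lij :: "nat \<Rightarrow> nat \<Rightarrow> (nat \<Rightarrow> nat \<Rightarrow> int) \<Rightarrow> nat \<Rightarrow> nat \<Rightarrow> nat \<Rightarrow> int" where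
  "Lij p q m i j k = (m j k - m i k) mod int (p*q)"

definition is_PQR :: "nat \<Rightarrow> nat \<Rightarrow> nat \<Rightarrow> (nat \<Rightarrow> nat \<Rightarrow> int) \<Rightarrow> nat \<Rightarrow> nat
    \<Rightarrow> nat set \<Rightarrow> nat set \<Rightarrow> nat set \<Rightarrow> int \<Rightarrow> bool" where
  "is_PQR p q N m i j P Q R r \<longleftrightarrow>
     P \<union> Q \<union> R = {..<N} \<and> P \<inter> Q = {} \<and> P \<inter> R = {} \<and> Q \<inter> R = {} \<and>
     r \<in> {0..<int (p*q)} \<and>
     card R = 2 \<and> (\<forall>k\<in>R. Lij p q m i j k = r) \<and>
     card P = p - 1 \<and>
     Lij p q m i j ` P = {x \<in> {0..<int (p*q)}. x mod int q = r mod int q} - {r} \<and>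
     card Q = q - 1 \<and>
     Lij p q m i j ` Q = {x \<in> {0..<int (p*q)}. x mod int p = r mod int p} - {r}"

end

theory Submission
  imports Defs "HOL-Computational_Algebra.Polynomial" "HOL-Number_Theory.Cong"
begin

text \<open>
  Write \<open>L\<^sub>i\<^sub>k = L\<^sub>i\<^sub>j + L\<^sub>j\<^sub>k\<close>. Orthogonality of rows \<open>i\<close> and \<open>k\<close> is the vanishing of the sum of the
  \<open>p + q\<close> powers \<open>\<zeta>^L\<^sub>i\<^sub>k(t)\<close> of a primitive \<open>pq\<close>-th root of unity \<open>\<zeta>\<close>. It stays vanishing under every Galois
  automorphism \<open>\<zeta> \<mapsto> \<zeta>\<^sup>a\<close> (a Frobenius argument on the minimal polynomial of \<open>\<zeta>\<close>), and averaging
  these relations against Ramanujan sums yields counting identities forcing the values of \<open>L\<^sub>i\<^sub>k\<close>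
  to form a \<open>q\<close>-gon of constant residue \<open>x0\<close> modulo \<open>p\<close> and a \<open>p\<close>-gon of constant residue
  \<open>y0\<close> modulo \<open>q\<close>. Summing residues modulo the odd prime \<open>p\<close> gives \<open>x0 \<equiv> r\<^sub>i\<^sub>j + r\<^sub>j\<^sub>k\<close>.
  If also \<open>y0 \<equiv> r\<^sub>i\<^sub>j + r\<^sub>j\<^sub>k\<close> modulo \<open>q\<close>, then \<open>P\<^sub>i\<^sub>j\<close> misses \<open>Q\<^sub>j\<^sub>k\<close>, so \<open>P\<^sub>i\<^sub>j \<subseteq> (P\<^sub>i\<^sub>j \<inter> P\<^sub>j\<^sub>k) \<union> R\<^sub>j\<^sub>k\<close>
  and \<open>#(P\<^sub>i\<^sub>j \<inter> P\<^sub>j\<^sub>k) \<ge> p - 3\<close>. Otherwise all but at most two of the \<open>p + 1\<close> indices of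
  \<open>P\<^sub>i\<^sub>j \<union> R\<^sub>i\<^sub>j\<close> lie in \<open>R\<^sub>i\<^sub>j\<close>, which is impossible for \<open>p \<ge> 5\<close>.
\<close>

definition ipoly :: "int poly \<Rightarrow> 'a :: comm_ring_1 \<Rightarrow> 'a" where
  "ipoly f z = poly (map_poly of_int f) z"

lemma map_poly_of_int_add: "map_poly (of_int :: int \<Rightarrow> 'a :: comm_ring_1) (f + g) = map_poly of_int f + map_poly of_int g"
  by (simp add: poly_eq_iff coeff_map_poly)

lemma map_poly_of_int_diff: "map_poly (of_int :: int \<Rightarrow> 'a :: comm_ring_1) (f - g) = map_poly of_int f - map_poly of_int g"
  by (simp add: poly_eq_iff coeff_map_poly)

lemma map_poly_of_int_smult:
  "map_poly (of_int :: int \<Rightarrow> 'a :: comm_ring_1) (smult a f) = smult (of_int a) (map_poly of_int f)"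
  by (simp add: poly_eq_iff coeff_map_poly)

lemma map_poly_of_int_mult: "map_poly (of_int :: int \<Rightarrow> 'a :: comm_ring_1) (f * g) = map_poly of_int f * map_poly of_int g"
  by (induction f) (simp_all add: map_poly_of_int_add map_poly_of_int_smult map_poly_pCons)

lemma ipoly_0 [simp]: "ipoly 0 z = 0"
  and ipoly_pCons [simp]: "ipoly (pCons a f) z = of_int a + z * ipoly f z"
  and ipoly_1 [simp]: "ipoly 1 z = 1"
  and ipoly_const [simp]: "ipoly [:c:] z = of_int c"
  and ipoly_monom [simp]: "ipoly (monom c k) z = of_int c * z ^ k"
  and ipoly_add [simp]: "ipoly (f + g) z = ipoly f z + ipoly g z"
  and ipoly_diff [simp]: "ipoly (f - g) z = ipoly f z - ipoly g z"
  and ipoly_mult [simp]: "ipoly (f * g) z = ipoly f z * ipoly g z"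
  and ipoly_smult [simp]: "ipoly (smult a f) z = of_int a * ipoly f z"
  by (simp_all add: ipoly_def map_poly_of_int_add map_poly_of_int_diff map_poly_of_int_mult
      map_poly_of_int_smult map_poly_monom poly_monom map_poly_pCons)

lemma ipoly_sum: "ipoly (\<Sum>t\<in>A. f t) z = (\<Sum>t\<in>A. ipoly (f t) z)"
  by (induction A rule: infinite_finite_induct) simp_all

lemma ipoly_pcompose: "ipoly (pcompose f g) z = ipoly f (ipoly g z)"
  by (induction f) (simp_all add: pcompose_pCons)

section \<open>Frobenius modulo a prime\<close>

lemma prime_dvd_power_add_diff:
  fixes u v :: "'a :: comm_ring_1"
  assumes "prime l"
  shows "of_nat l dvd (u + v) ^ l - u ^ l - v ^ l"
proof -
  have l: "l > 0" using assms prime_gt_0_nat by blast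
  have "(u + v) ^ l = (\<Sum>k\<le>l. of_nat (l choose k) * u ^ k * v ^ (l - k))"
    by (rule binomial_ring)
  also have "{..l} = insert 0 (insert l {1..<l})" using l by auto
  finally have "(u + v) ^ l - u ^ l - v ^ l = (\<Sum>k\<in>{1..<l}. of_nat (l choose k) * u ^ k * v ^ (l - k))"
    using l by (simp add: algebra_simps)
  also have "of_nat l dvd \<dots>"
  proof (rule dvd_sum)
    fix k assume "k \<in> {1..<l}"
    then have "l dvd l choose k" using assms by (intro dvd_choose_prime) auto
    then show "of_nat l dvd of_nat (l choose k) * u ^ k * v ^ (l - k)"
      by (elim dvdE) (simp add: mult.assoc)
  qed
  finally show ?thesis .
qed

lemma dvd_power_diff_power:
  fixes a b :: "'a :: comm_ring_1"
  shows "a - b dvd a ^ k - b ^ k"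
  by (simp add: power_diff_sumr2)

lemma prime_dvd_power_self_diff:
  fixes a :: int
  assumes "prime l"
  shows "int l dvd a ^ l - a"
proof -
  have l: "int l > 0" using assms prime_gt_0_nat by simp
  have nat_case: "int l dvd int b ^ l - int b" for b :: nat
  proof (induction b)
    case 0 then show ?case using l by (simp add: zero_power)
  next
    case (Suc b)
    have "int (Suc b) ^ l - int (Suc b) = ((int b + 1) ^ l - int b ^ l - 1 ^ l) + (int b ^ l - int b)"
      by (simp add: add.commute)
    then show ?case using prime_dvd_power_add_diff[OF assms, of "int b" 1] Suc by (metis dvd_add)
  qed
  define b where "b = nat (a mod int l)"
  have "int l dvd a - int b" using l by (simp add: b_def mod_eq_dvd_iff)
  moreover from this have "int l dvd a ^ l - int b ^ l"
    using dvd_power_diff_power dvd_trans by blast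
  ultimately have "int l dvd (a ^ l - int b ^ l) - (a - int b) + (int b ^ l - int b)"
    by (intro dvd_add[OF dvd_diff nat_case])
  then show ?thesis by simp
qed

lemma prime_dvd_pcompose_power_diff:
  fixes h :: "int poly"
  assumes "prime l"
  shows "of_nat l dvd pcompose h (monom 1 l) - h ^ l"
proof (induction h)
  case 0 then show ?case using assms prime_gt_0_nat by (simp add: zero_power)
next
  case (pCons a h)
  let ?X = "monom (1::int) 1"
  have h: "pCons a h = [:a:] + ?X * h"
    by (simp add: poly_eq_iff coeff_pCons coeff_monom_mult split: nat.splits)
  have e1: "pcompose (pCons a h) (monom 1 l) = [:a:] + monom 1 l * pcompose h (monom 1 l)"
    by (simp add: pcompose_pCons)
  have e2: "(pCons a h) ^ l = ([:a:] + ?X * h) ^ l" by (simp only: h)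
  have e3: "(?X * h) ^ l = monom 1 l * h ^ l" by (simp add: power_mult_distrib monom_power)
  have decomp: "pcompose (pCons a h) (monom 1 l) - (pCons a h) ^ l =
      monom 1 l * (pcompose h (monom 1 l) - h ^ l)
      - (([:a:] + ?X * h) ^ l - [:a:] ^ l - (?X * h) ^ l) - ([:a:] ^ l - [:a:])"
    unfolding e1 e2 e3 by (simp add: algebra_simps)
  have "of_nat l dvd [:a:] ^ l - [:a:]"
    using prime_dvd_power_self_diff[OF assms, of a]
    by (simp add: of_nat_poly poly_const_pow)
  then show ?case unfolding decomp
    by (intro dvd_diff[OF dvd_diff] dvd_mult pCons.IH prime_dvd_power_add_diff[OF assms])
qed

lemma dvd_const_if_monic_multiple_cong:
  fixes f A :: "int poly" and l :: int
  assumes "l > 0" "lead_coeff f = 1" "degree f \<ge> 1" and "[:l:] dvd [:c:] - f * A"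
  shows "l dvd c"
proof -
  define A' where "A' = map_poly (\<lambda>a. a mod l) A"
  define B where "B = map_poly (\<lambda>a. a div l) A"
  have "A = A' + smult l B"
    by (simp add: poly_eq_iff A'_def B_def coeff_map_poly)
  then have "[:c:] - f * A' = ([:c:] - f * A) + [:l:] * (f * B)"
    by (simp add: algebra_simps)
  then have "[:l:] dvd [:c:] - f * A'"
    by (simp only:) (intro dvd_add assms(4) dvd_triv_left)
  then have dvd_coeff: "l dvd coeff ([:c:] - f * A') k" for k
    by (simp add: const_poly_dvd_iff)
  show ?thesis
  proof (cases "A' = 0")
    case True
    then show ?thesis using dvd_coeff[of 0] by simp
  next
    case False
    \<comment> \<open>the top coefficient of \<open>f * A'\<close> is a residue in \<open>(0, l)\<close> divisible by \<open>l\<close>\<close>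
    have "degree (f * A') = degree f + degree A'"
      using False assms(2) by (intro degree_mult_eq) auto
    then have "coeff (f * A') (degree f + degree A') = lead_coeff A'"
      by (metis assms(2) lead_coeff_mult mult_1)
    then have "coeff ([:c:] - f * A') (degree f + degree A') = - lead_coeff A'"
      using assms(3) by (simp add: coeff_pCons split: nat.splits)
    then have "l dvd lead_coeff A'" using dvd_coeff by (metis dvd_minus_iff)
    moreover have "0 \<le> lead_coeff A'" "lead_coeff A' < l"
      using assms(1) by (simp_all add: A'_def coeff_map_poly)
    moreover have "lead_coeff A' \<noteq> 0" using False by simp
    ultimately show ?thesis using zdvd_imp_le by fastforce
  qed
qed

section \<open>Galois conjugates of roots of unity\<close>

definition is_int_minpoly :: "'a :: {idom, ring_char_0} \<Rightarrow> int poly \<Rightarrow> bool" where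
  "is_int_minpoly z f \<longleftrightarrow> lead_coeff f = 1 \<and> ipoly f z = 0 \<and> (\<forall>g. ipoly g z = 0 \<longrightarrow> f dvd g)"

lemma primitive_dvd_smult_imp_dvd:
  fixes f g :: "int poly"
  assumes "content f = 1" "c \<noteq> 0" "f dvd smult c g"
  shows "f dvd g"
proof -
  have "f dvd primitive_part (smult c g)"
    using primitive_part_dvd_primitive_partI[OF assms(3)] by (simp add: primitive_part_prim assms(1))
  then have "f dvd smult (sgn c) (primitive_part g)"
    by (simp add: primitive_part_smult)
  then have "f dvd smult (sgn c) (smult (sgn c) (primitive_part g))"
    by (rule dvd_smult)
  then have "f dvd primitive_part g"
    using assms(2) by (cases "c > 0") (simp_all add: sgn_if)
  also have "primitive_part g dvd g"
    by (metis content_times_primitive_part dvd_smult dvd_refl)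
  finally show ?thesis .
qed

lemma primitive_least_degree_root_dvd:
  fixes f :: "int poly"
  assumes f: "f \<noteq> 0" "content f = 1" "ipoly f z = 0"
    and least: "\<And>h. h \<noteq> 0 \<Longrightarrow> ipoly h z = 0 \<Longrightarrow> degree f \<le> degree h"
    and g: "ipoly g z = 0"
  shows "f dvd g"
proof -
  obtain s r where "pseudo_divmod g f = (s, r)" by fastforce
  note div = pseudo_divmod[OF f(1) this]
  define c where "c = lead_coeff f ^ (Suc (degree g) - degree f)"
  have "c \<noteq> 0" using f(1) by (simp add: c_def)
  have eq: "smult c g = f * s + r" using div(1) by (simp add: c_def)
  then have "ipoly r z = 0"
    using f(3) g by (metis add_0 ipoly_add ipoly_mult ipoly_smult mult_zero_left mult_zero_right)
  then have "r = 0"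
    using least[of r] div(2) by fastforce
  then have "f dvd smult c g" using eq by simp
  then show ?thesis using primitive_dvd_smult_imp_dvd f(2) \<open>c \<noteq> 0\<close> by blast
qed

lemma int_minpoly_exists:
  assumes "lead_coeff g = 1" "ipoly g z = 0"
  shows "\<exists>f. is_int_minpoly z f"
proof -
  let ?S = "{f::int poly. f \<noteq> 0 \<and> ipoly f z = 0}"
  have "g \<in> ?S" using assms by auto
  then obtain f0 where f0: "f0 \<in> ?S" and least: "\<And>f. f \<in> ?S \<Longrightarrow> degree f0 \<le> degree f"
    using ex_has_least_nat[of "\<lambda>f. f \<in> ?S" _ degree] by blast
  define f1 where "f1 = primitive_part f0"
  have f1: "f1 \<noteq> 0" "content f1 = 1" "degree f1 = degree f0"
    using f0 by (simp_all add: f1_def)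
  have "of_int (content f0) * ipoly f1 z = ipoly f0 z"
    by (simp flip: ipoly_smult add: f1_def)
  moreover have "content f0 \<noteq> 0" "ipoly f0 z = 0" using f0 by simp_all
  ultimately have "ipoly f1 z = 0" by simp
  have f1_dvd: "f1 dvd h" if "ipoly h z = 0" for h
    by (rule primitive_least_degree_root_dvd[OF f1(1,2) \<open>ipoly f1 z = 0\<close> _ that])
      (use least f1(3) in simp)
  obtain s where "g = f1 * s" using f1_dvd[OF assms(2)] by blast
  then have "lead_coeff f1 * lead_coeff s = 1" using assms(1) by (simp add: lead_coeff_mult)
  then have u: "lead_coeff f1 * lead_coeff f1 = 1" using zmult_eq_1_iff by auto
  define f where "f = smult (lead_coeff f1) f1"
  have "lead_coeff f = 1" using u f1(1) by (simp add: f_def)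
  moreover have "ipoly f z = 0" by (simp add: f_def \<open>ipoly f1 z = 0\<close>)
  moreover have "f dvd h" if h: "ipoly h z = 0" for h
  proof -
    obtain t where "h = f1 * t" using f1_dvd[OF h] by blast
    then have "h = f * smult (lead_coeff f1) t" using u by (simp add: f_def mult.commute)
    then show ?thesis by (rule dvdI)
  qed
  ultimately show ?thesis unfolding is_int_minpoly_def by blast
qed

lemma degree_int_minpoly:
  assumes "is_int_minpoly z f"
  shows "degree f \<ge> 1"
proof (rule ccontr)
  assume "\<not> degree f \<ge> 1"
  then have "degree f = 0" by simp
  then have "f = [:lead_coeff f:]" by (metis degree_0_id)
  then have "f = 1" using assms by (simp add: is_int_minpoly_def one_pCons)
  then show False using assms by (simp add: is_int_minpoly_def)
qed

lemma lead_coeff_X_power_minus_1: "n > 0 \<Longrightarrow> lead_coeff (monom (1::int) n - 1) = 1"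
  using lead_coeff_add_le[of "-1" "monom (1::int) n"] by (simp add: degree_monom_eq)

text \<open>Over \<open>\<int>/l\<close> the polynomial \<open>X\<^sup>n - 1\<close> is separable when \<open>l \<nmid> n\<close>, since
  \<open>n = X\<cdot>(X\<^sup>n - 1)' - n\<cdot>(X\<^sup>n - 1)\<close>. So a factor \<open>f\<close> of \<open>X\<^sup>n - 1 = f\<cdot>h\<close> cannot divide
  \<open>h\<^sup>l\<close> modulo \<open>l\<close>.\<close>

lemma prime_dvd_exponent_if_repeated_factor_mod:
  fixes f h u :: "int poly"
  assumes l: "prime l" and n: "n > 0" and Fh: "monom 1 n - 1 = f * h"
    and f: "lead_coeff f = 1" "degree f \<ge> 1" and "of_nat l dvd f * u - h ^ l"
  shows "l dvd n"
proof -
  let ?X = "monom (1::int) 1"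
  define V where "V = ?X * pderiv h - smult (int n) h"
  obtain w where "f * u - h ^ l = of_nat l * w"
    using assms(6) by (elim dvdE)
  then have w: "h ^ l = f * u - of_nat l * w" by (simp add: algebra_simps)
  have "?X * monom (int n) (n - 1) = monom (int n) n" using n by (simp add: mult_monom)
  then have "[:int n:] = ?X * pderiv (monom 1 n - 1) - smult (int n) (monom 1 n - 1)"
    by (simp add: pderiv_diff pderiv_monom smult_diff_right monom_0 smult_monom)
  also have "\<dots> = f * V + ?X * pderiv f * h"
    unfolding Fh pderiv_mult V_def by (simp add: algebra_simps)
  finally have "f * V dvd [:int n:] ^ l - (?X * pderiv f * h) ^ l"
    using dvd_power_diff_power[of "[:int n:]" "?X * pderiv f * h" l] by simp
  then obtain W0 where "[:int n:] ^ l - (?X * pderiv f * h) ^ l = f * V * W0"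
    by (elim dvdE)
  then have W: "[:int n:] ^ l = f * (V * W0) + (?X * pderiv f) ^ l * h ^ l"
    by (simp add: algebra_simps)
  have "[:int n ^ l:] = [:int n:] ^ l" by (simp add: poly_const_pow)
  also have "\<dots> = f * (V * W0) + (?X * pderiv f) ^ l * (f * u - of_nat l * w)"
    by (simp only: W w)
  finally have "[:int n ^ l:] - f * (V * W0 + (?X * pderiv f) ^ l * u)
      = [:int l:] * (- ((?X * pderiv f) ^ l * w))"
    by (simp add: algebra_simps of_nat_poly)
  then have "[:int l:] dvd [:int n ^ l:] - f * (V * W0 + (?X * pderiv f) ^ l * u)"
    by (metis dvd_triv_left)
  then have "int l dvd int n ^ l"
    using l f by (intro dvd_const_if_monic_multiple_cong) (auto simp: prime_gt_0_nat)
  then show ?thesis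
    using l by (metis int_dvd_int_iff of_nat_power prime_dvd_power)
qed

lemma int_minpoly_root_power_prime:
  assumes zn: "z ^ n = 1" and n: "n > 0" and f: "is_int_minpoly z f"
    and l: "prime l" "\<not> l dvd n"
  shows "ipoly f (z ^ l) = 0"
proof (rule ccontr)
  assume nonroot: "ipoly f (z ^ l) \<noteq> 0"
  have "f dvd monom 1 n - 1" using f zn by (simp add: is_int_minpoly_def)
  then obtain h where Fh: "monom 1 n - 1 = f * h" by blast
  have "ipoly (monom 1 n - 1) (z ^ l) = 0"
    using zn by (simp flip: power_mult add: mult.commute[of l n] power_mult)
  then have "ipoly (pcompose h (monom 1 l)) z = 0"
    using nonroot by (simp add: Fh ipoly_pcompose)
  then obtain u where "pcompose h (monom 1 l) = f * u"
    using f by (auto simp: is_int_minpoly_def)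
  then have "of_nat l dvd f * u - h ^ l"
    using prime_dvd_pcompose_power_diff[OF l(1), of h] by (simp only:)
  then have "l dvd n"
    using prime_dvd_exponent_if_repeated_factor_mod[OF l(1) n Fh] f degree_int_minpoly
    by (auto simp: is_int_minpoly_def)
  with l(2) show False ..
qed

lemma ipoly_root_power_prime:
  fixes z :: "'a :: {idom, ring_char_0}"
  assumes "z ^ n = 1" "n > 0" "prime l" "\<not> l dvd n" "ipoly g z = 0"
  shows "ipoly g (z ^ l) = 0"
proof -
  have "ipoly (monom 1 n - 1) z = 0" using assms(1) by simp
  then obtain f where f: "is_int_minpoly z f"
    using int_minpoly_exists lead_coeff_X_power_minus_1[OF assms(2)] by blast
  then obtain s where "g = f * s" using assms(5) by (auto simp: is_int_minpoly_def)
  then show ?thesis using int_minpoly_root_power_prime[OF assms(1,2) f assms(3,4)] by simp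
qed

lemma ipoly_root_power_coprime:
  fixes z :: "'a :: {idom, ring_char_0}"
  assumes "z ^ n = 1" "n > 0" "coprime a n" "ipoly g z = 0"
  shows "ipoly g (z ^ a) = 0"
  using assms(3,1,4)
proof (induction a arbitrary: z rule: prime_divisors_induct)
  case zero
  then show ?case using assms(2) by simp
next
  case (unit a)
  then show ?case by simp
next
  case (factor l a)
  have "\<not> l dvd n"
    using factor.prems(1) factor.hyps(1) by (metis coprime_common_divisor coprime_mult_left_iff dvd_refl not_prime_unit)
  moreover have "(z ^ a) ^ n = 1"
    using factor.prems(2) by (metis mult.commute power_mult power_one)
  moreover have "ipoly g (z ^ a) = 0"
    using factor by simp
  ultimately have "ipoly g ((z ^ a) ^ l) = 0"
    using ipoly_root_power_prime assms(2) factor.hyps(1) by blast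
  then show ?case by (simp add: power_mult mult.commute)
qed

section \<open>Sums of roots of unity\<close>

definition unity_root :: "nat \<Rightarrow> int \<Rightarrow> complex" where
  "unity_root n x = cis (2 * pi * real_of_int x / real n)"

lemma unity_root_0 [simp]: "unity_root n 0 = 1"
  by (simp add: unity_root_def)

lemma unity_root_add: "unity_root n (x + y) = unity_root n x * unity_root n y"
  by (simp add: unity_root_def cis_mult add_divide_distrib algebra_simps)

lemma unity_root_power: "unity_root n x ^ a = unity_root n (int a * x)"
  by (simp add: unity_root_def DeMoivre algebra_simps)

lemma unity_root_eq_1_iff:
  assumes "n > 0"
  shows "unity_root n x = 1 \<longleftrightarrow> int n dvd x"
proof
  assume "unity_root n x = 1"
  then have "cos (2 * pi * real_of_int x / real n) = 1"
    by (simp add: unity_root_def complex_eq_iff)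
  then obtain k :: int where "2 * pi * real_of_int x / real n = real_of_int k * 2 * pi"
    by (subst (asm) cos_one_2pi_int) blast
  then have "real_of_int x = real_of_int (k * int n)" using assms by (simp add: field_simps)
  then have "x = k * int n" by (simp only: of_int_eq_iff)
  then show "int n dvd x" by simp
next
  assume "int n dvd x"
  then obtain k where "x = int n * k" by blast
  moreover have "cis (2 * pi * real_of_int k) = 1" by (rule cis_multiple_2pi) simp
  ultimately show "unity_root n x = 1" using assms by (simp add: unity_root_def mult.assoc)
qed

lemma unity_root_cong:
  assumes "n > 0" "[x = y] (mod int n)"
  shows "unity_root n x = unity_root n y"
proof -
  have "unity_root n (x - y) = 1" using assms by (simp add: unity_root_eq_1_iff cong_iff_dvd_diff)
  then show ?thesis using unity_root_add[of n y "x - y"] by simp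
qed

lemma unity_root_mult_modulus: "p > 0 \<Longrightarrow> unity_root (p * q) (int p * x) = unity_root q x"
  by (simp add: unity_root_def mult.assoc)

lemma sum_unity_root_multiples:
  assumes "k > 0"
  shows "(\<Sum>b<k. unity_root k (int b * m)) = of_nat k * of_bool (int k dvd m)"
proof (cases "int k dvd m")
  case True
  then have "unity_root k (int b * m) = 1" for b
    using assms by (simp add: unity_root_eq_1_iff)
  then show ?thesis using True by simp
next
  case False
  have "unity_root k m ^ k = 1" using assms by (simp add: unity_root_power unity_root_eq_1_iff)
  moreover have "unity_root k m \<noteq> 1" using False assms by (simp add: unity_root_eq_1_iff)
  ultimately show ?thesis using False by (simp add: sum_gp_strict flip: unity_root_power)
qed

lemma vanishing_unity_root_sum_conjugate:
  assumes "n > 0" "coprime a n" "(\<Sum>t\<in>T. unity_root n (e t)) = 0"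
  shows "(\<Sum>t\<in>T. unity_root n (int a * e t)) = 0"
proof -
  define g where "g = (\<Sum>t\<in>T. monom (1::int) (nat (e t mod int n)))"
  have ipoly_g: "ipoly g (unity_root n 1 ^ b) = (\<Sum>t\<in>T. unity_root n (int b * e t))" for b
    unfolding g_def ipoly_sum
  proof (intro sum.cong refl)
    fix t
    have "[(e t mod int n) * int b = int b * e t] (mod int n)"
      by (simp add: cong_def mod_mult_right_eq mult.commute)
    then show "ipoly (monom 1 (nat (e t mod int n))) (unity_root n 1 ^ b) = unity_root n (int b * e t)"
      using assms(1) by (simp add: unity_root_power flip: power_mult) (simp add: unity_root_cong)
  qed
  have "unity_root n 1 ^ n = 1" using assms(1) by (simp add: unity_root_power unity_root_eq_1_iff)
  moreover have "ipoly g (unity_root n 1 ^ 1) = 0" using assms(3) by (simp only: ipoly_g) simp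
  ultimately have "ipoly g ((unity_root n 1) ^ a) = 0"
    using ipoly_root_power_coprime[OF _ assms(1,2)] by simp
  then show ?thesis by (simp only: ipoly_g)
qed

lemma coprime_prime_right_iff:
  fixes a p :: nat
  assumes "prime p"
  shows "coprime a p \<longleftrightarrow> \<not> p dvd a"
  using assms prime_imp_coprime[of p a] coprime_common_divisor[of a p p] not_prime_unit
  by (auto simp: coprime_commute)

lemma sum_unity_root_multiples_of_factor:
  assumes "p > 0"
  shows "(\<Sum>a | a < p * q \<and> p dvd a. unity_root (p * q) (int a * m)) = of_nat q * of_bool (int q dvd m)"
proof (cases "q = 0")
  case False
  have "{a. a < p * q \<and> p dvd a} = (\<lambda>b. p * b) ` {..<q}"
    using assms by auto
  moreover have "inj_on (\<lambda>b. p * b) {..<q}" using assms by (auto simp: inj_on_def)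
  ultimately have "(\<Sum>a | a < p * q \<and> p dvd a. unity_root (p * q) (int a * m))
      = (\<Sum>b<q. unity_root (p * q) (int p * (int b * m)))"
    by (simp add: sum.reindex mult.assoc)
  also have "\<dots> = of_nat q * of_bool (int q dvd m)"
    using assms False by (simp add: unity_root_mult_modulus sum_unity_root_multiples)
  finally show ?thesis .
qed simp

text \<open>The Ramanujan sum \<open>c\<^sub>p\<^sub>q(m)\<close>, by inclusion-exclusion over the multiples of \<open>p\<close> and of \<open>q\<close>.\<close>

lemma ramanujan_sum_prime_product:
  assumes p: "prime p" and q: "prime q" and "p \<noteq> q"
  shows "(\<Sum>a | a < p * q \<and> coprime a (p * q). unity_root (p * q) (int a * m)) =
     of_int (int (p * q) * of_bool (int (p * q) dvd m) - int q * of_bool (int q dvd m)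
       - int p * of_bool (int p dvd m) + 1)"
proof -
  let ?f = "\<lambda>a. unity_root (p * q) (int a * m)"
  let ?U = "{a. a < p * q \<and> coprime a (p * q)}"
  let ?Mp = "{a. a < p * q \<and> p dvd a}"
  let ?Mq = "{a. a < p * q \<and> q dvd a}"
  have pq0: "p > 0" "q > 0" using p q prime_gt_0_nat by auto
  have coprime_iff: "coprime a (p * q) \<longleftrightarrow> \<not> p dvd a \<and> \<not> q dvd a" for a
    using p q by (simp add: coprime_prime_right_iff)
  have "{..<p * q} = ?U \<union> (?Mp \<union> ?Mq)" "?U \<inter> (?Mp \<union> ?Mq) = {}"
    using coprime_iff by auto
  then have split: "sum ?f {..<p * q} = sum ?f ?U + sum ?f (?Mp \<union> ?Mq)"
    by (simp add: sum.union_disjoint)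
  have "?Mp \<inter> ?Mq = {0}"
  proof (intro set_eqI iffI)
    fix a assume a: "a \<in> ?Mp \<inter> ?Mq"
    then have "p * q dvd a" using assms by (simp add: divides_mult primes_coprime)
    then show "a \<in> {0}" using a by (auto dest: dvd_imp_le)
  qed (use pq0 in auto)
  then have "sum ?f (?Mp \<union> ?Mq) = sum ?f ?Mp + sum ?f ?Mq - 1"
    by (simp add: sum_Un)
  then have "sum ?f ?U = sum ?f {..<p * q} - sum ?f ?Mp - sum ?f ?Mq + 1"
    using split by (simp add: algebra_simps)
  also have "\<dots> = of_nat (p * q) * of_bool (int (p * q) dvd m) - of_nat q * of_bool (int q dvd m)
       - of_nat p * of_bool (int p dvd m) + 1"
    using sum_unity_root_multiples[of "p * q" m] sum_unity_root_multiples_of_factor[OF pq0(1), of q m]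
      sum_unity_root_multiples_of_factor[OF pq0(2), of p m] pq0
    by (simp only: mult.commute[of q p]) simp
  finally show ?thesis by simp
qed

text \<open>Summing the conjugate relations against \<open>\<zeta>\<^sup>-\<^sup>a\<^sup>s\<close> over all units \<open>a\<close> turns the vanishing sum
  into a linear relation between the numbers of \<open>t\<close> with \<open>e t \<equiv> s\<close> modulo \<open>pq\<close>, \<open>p\<close> and \<open>q\<close>.\<close>

lemma vanishing_sum_count_identity:
  assumes p: "prime p" and q: "prime q" and "p \<noteq> q"
    and vanish: "(\<Sum>t<N. unity_root (p * q) (e t)) = 0"
  shows "int (p * q) * int (card {t. t < N \<and> [e t = s] (mod int (p * q))}) + int N
       = int q * int (card {t. t < N \<and> [e t = s] (mod int q)})
         + int p * int (card {t. t < N \<and> [e t = s] (mod int p)})"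
proof -
  define n where "n = p * q"
  have n: "n > 0" using p q by (simp add: n_def prime_gt_0_nat)
  define U where "U = {a. a < n \<and> coprime a n}"
  define R where "R x = int n * of_bool (int n dvd x) - int q * of_bool (int q dvd x)
      - int p * of_bool (int p dvd x) + 1" for x
  have "0 = (\<Sum>a\<in>U. unity_root n (- (int a * s)) * (\<Sum>t<N. unity_root n (int a * e t)))"
    using vanishing_unity_root_sum_conjugate[OF n _ vanish[folded n_def]] by (simp add: U_def)
  also have "\<dots> = (\<Sum>a\<in>U. \<Sum>t<N. unity_root n (int a * (e t - s)))"
    by (simp add: sum_distrib_left algebra_simps flip: unity_root_add)
  also have "\<dots> = (\<Sum>t<N. \<Sum>a\<in>U. unity_root n (int a * (e t - s)))"
    by (rule sum.swap)
  also have "\<dots> = (\<Sum>t<N. of_int (R (e t - s)))"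
    unfolding U_def R_def n_def by (intro sum.cong refl ramanujan_sum_prime_product assms)
  finally have "(\<Sum>t<N. R (e t - s)) = 0"
    by (metis of_int_0_eq_iff of_int_sum)
  moreover have "{..<N} \<inter> {t. d dvd e t - s} = {t. t < N \<and> [e t = s] (mod d)}" for d
    by (auto simp: cong_iff_dvd_diff)
  ultimately show ?thesis
    by (simp add: R_def sum.distrib sum_subtractf flip: sum_distrib_left) (simp add: n_def algebra_simps)
qed

lemma cong_add_cancel_iff:
  fixes a a' b b' n :: int
  shows cong_add_cancel_left_iff: "[a = a'] (mod n) \<Longrightarrow> [a + b = a' + b'] (mod n) \<longleftrightarrow> [b = b'] (mod n)"
    and cong_add_cancel_right_iff: "[b = b'] (mod n) \<Longrightarrow> [a + b = a' + b'] (mod n) \<longleftrightarrow> [a = a'] (mod n)"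
proof -
  have "a + b - (a' + b') = (a - a') + (b - b')" by simp
  then show "[a = a'] (mod n) \<Longrightarrow> [a + b = a' + b'] (mod n) \<longleftrightarrow> [b = b'] (mod n)"
    and "[b = b'] (mod n) \<Longrightarrow> [a + b = a' + b'] (mod n) \<longleftrightarrow> [a = a'] (mod n)"
    by (simp_all only: cong_iff_dvd_diff dvd_add_right_iff dvd_add_left_iff)
qed

lemma single_excess_if_sum:
  fixes C :: "'a \<Rightarrow> int" and b :: int
  assumes "finite T" "b \<ge> 2"
    and C: "\<And>x. x \<in> T \<Longrightarrow> C x \<ge> 0 \<and> [C x = 1] (mod b)"
    and sum: "(\<Sum>x\<in>T. C x) = int (card T) + b"
  shows "\<exists>x0\<in>T. C x0 = b + 1 \<and> (\<forall>x\<in>T - {x0}. C x = 1)"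
proof -
  have C_ge_1: "C x \<ge> 1" if "x \<in> T" for x
  proof (rule ccontr)
    assume "\<not> C x \<ge> 1"
    then have "C x = 0" using C[OF that] by simp
    then show False using C[OF that] assms(2) by (simp add: cong_iff_dvd_diff)
  qed
  have sum1: "(\<Sum>x\<in>T. C x - 1) = b" using sum by (simp add: sum_subtractf)
  have "\<exists>x0\<in>T. C x0 \<noteq> 1"
  proof (rule ccontr)
    assume "\<not> (\<exists>x0\<in>T. C x0 \<noteq> 1)"
    then have "(\<Sum>x\<in>T. C x - 1) = 0" by simp
    with sum1 assms(2) show False by simp
  qed
  then obtain x0 where x0: "x0 \<in> T" "C x0 \<noteq> 1" by blast
  then have "b \<le> C x0 - 1"
    using C[OF x0(1)] C_ge_1[OF x0(1)] by (intro zdvd_imp_le) (auto simp: cong_iff_dvd_diff dvd_diff_commute)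
  moreover have "(\<Sum>x\<in>T. C x - 1) = (C x0 - 1) + (\<Sum>x\<in>T - {x0}. C x - 1)"
    using x0(1) assms(1) by (simp add: sum.remove)
  moreover have nonneg: "\<forall>x\<in>T - {x0}. C x - 1 \<ge> 0" using C_ge_1 by fastforce
  then have "(\<Sum>x\<in>T - {x0}. C x - 1) \<ge> 0" by (intro sum_nonneg) blast
  ultimately have "C x0 - 1 = b" "(\<Sum>x\<in>T - {x0}. C x - 1) = 0"
    using sum1 by linarith+
  then show ?thesis
    using x0(1) nonneg sum_nonneg_eq_0_iff[of "T - {x0}" "\<lambda>x. C x - 1"] assms(1) by auto
qed

lemma sum_residue_counts:
  fixes e :: "nat \<Rightarrow> int"
  assumes "d > 0"
  shows "(\<Sum>x\<in>{0..<int d}. int (card {t. t < N \<and> [e t = x] (mod int d)})) = int N"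
proof -
  have "(\<Sum>x\<in>{0..<int d}. \<Sum>t\<in>{t \<in> {..<N}. e t mod int d = x}. 1) = (\<Sum>t\<in>{..<N}. 1::int)"
    using assms by (intro sum.group) auto
  moreover have "{t \<in> {..<N}. e t mod int d = x} = {t. t < N \<and> [e t = x] (mod int d)}"
    if "x \<in> {0..<int d}" for x
    using that by (auto simp: cong_def)
  ultimately show ?thesis by simp
qed

lemma residue_count_cong: "[x = y] (mod m) \<Longrightarrow> {t. t < N \<and> [e t = x] (mod m)} = {t. t < N \<and> [e t = y] (mod m)}"
  by (auto intro: cong_trans cong_sym)

lemma residue_counts_single_excess:
  fixes e :: "nat \<Rightarrow> int" and a b :: nat
  assumes "a > 0" "b \<ge> 2" "N = a + b"
    and counts: "\<And>x. [int (card {t. t < N \<and> [e t = x] (mod int a)}) = 1] (mod int b)"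
  obtains x0 where "card {t. t < N \<and> [e t = x0] (mod int a)} = b + 1"
    and "\<And>x. \<not> [x = x0] (mod int a) \<Longrightarrow> card {t. t < N \<and> [e t = x] (mod int a)} = 1"
proof -
  let ?C = "\<lambda>x. int (card {t. t < N \<and> [e t = x] (mod int a)})"
  have "(\<Sum>x\<in>{0..<int a}. ?C x) = int (card {0..<int a}) + int b"
    using sum_residue_counts[OF assms(1)] assms(3) by simp
  then obtain x0 where x0: "x0 \<in> {0..<int a}" "?C x0 = int b + 1"
    and others: "\<forall>x\<in>{0..<int a} - {x0}. ?C x = 1"
    using single_excess_if_sum[of "{0..<int a}" "int b" ?C] assms(2) counts by auto
  show ?thesis
  proof (rule that)
    show "card {t. t < N \<and> [e t = x0] (mod int a)} = b + 1" using x0(2) by linarith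
  next
    fix x assume "\<not> [x = x0] (mod int a)"
    have "[x = x mod int a] (mod int a)" by (simp add: cong_def)
    then have "?C x = ?C (x mod int a)" by (simp only: residue_count_cong)
    moreover have "x mod int a \<in> {0..<int a} - {x0}"
      using \<open>\<not> [x = x0] (mod int a)\<close> x0(1) assms(1) by (auto simp: cong_def)
    then have "?C (x mod int a) = 1" using others by blast
    ultimately show "card {t. t < N \<and> [e t = x] (mod int a)} = 1" by linarith
  qed
qed

lemma sum_range_int_dvd_odd:
  assumes "odd p"
  shows "int p dvd (\<Sum>x\<in>{0..<int p}. x)"
proof -
  have gauss: "(\<Sum>x\<in>{0..<int n}. x) * 2 = int n * (int n - 1)" for n
  proof (induction n)
    case (Suc n)
    have "{0..<int (Suc n)} = insert (int n) {0..<int n}" by auto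
    then show ?case using Suc by (simp add: algebra_simps)
  qed simp
  obtain k where "p = 2 * k + 1" using assms by (elim oddE)
  then have "(\<Sum>x\<in>{0..<int p}. x) = int p * int k" using gauss[of p] by simp
  then show ?thesis by simp
qed

lemma sum_cong_weighted_residue_counts:
  fixes e :: "nat \<Rightarrow> int"
  assumes "d > 0"
  shows "[(\<Sum>t<N. e t) = (\<Sum>x\<in>{0..<int d}. x * int (card {t. t < N \<and> [e t = x] (mod int d)}))] (mod int d)"
proof -
  have "(\<Sum>t<N. e t) = (\<Sum>x\<in>{0..<int d}. \<Sum>t\<in>{t \<in> {..<N}. e t mod int d = x}. e t)"
    using assms by (intro sum.group[symmetric]) auto
  also have "[\<dots> = (\<Sum>x\<in>{0..<int d}. \<Sum>t | t < N \<and> [e t = x] (mod int d). x)] (mod int d)"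
  proof (rule cong_sum)
    fix x assume "x \<in> {0..<int d}"
    then have "{t \<in> {..<N}. e t mod int d = x} = {t. t < N \<and> [e t = x] (mod int d)}"
      by (auto simp: cong_def)
    then show "[(\<Sum>t\<in>{t \<in> {..<N}. e t mod int d = x}. e t) = (\<Sum>t | t < N \<and> [e t = x] (mod int d). x)] (mod int d)"
      by (simp only:) (rule cong_sum, simp)
  qed
  finally show ?thesis by (simp add: mult.commute)
qed

lemma sum_cong_of_residue_counts:
  fixes e :: "nat \<Rightarrow> int" and p c :: nat
  assumes "odd p"
    and others: "\<And>x. \<not> [x = x0] (mod int p) \<Longrightarrow> card {t. t < N \<and> [e t = x] (mod int p)} = 1"
    and excess: "card {t. t < N \<and> [e t = x0] (mod int p)} = c + 1"
  shows "[(\<Sum>t<N. e t) = int c * x0] (mod int p)"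
proof -
  have p: "p > 0" using assms(1) by (simp add: odd_pos)
  let ?C = "\<lambda>x. int (card {t. t < N \<and> [e t = x] (mod int p)})"
  have "?C x = 1 + int c * of_bool (x = x0 mod int p)" if "x \<in> {0..<int p}" for x
    using that others[of x] excess residue_count_cong[of x0 "x0 mod int p" "int p" N e]
    by (auto simp: cong_def)
  then have "(\<Sum>x\<in>{0..<int p}. x * ?C x) = (\<Sum>x\<in>{0..<int p}. x + int c * (x * of_bool (x = x0 mod int p)))"
    by (intro sum.cong) (simp_all add: algebra_simps)
  also have "\<dots> = (\<Sum>x\<in>{0..<int p}. x) + int c * (x0 mod int p)"
    using p by (simp add: sum.distrib flip: sum_distrib_left)
  also have "[\<dots> = 0 + int c * x0] (mod int p)"
    using sum_range_int_dvd_odd[OF assms(1)] by (intro cong_add) (simp_all add: cong_0_iff cong_def mod_mult_right_eq)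
  finally have "[(\<Sum>x\<in>{0..<int p}. x * ?C x) = int c * x0] (mod int p)" by simp
  with sum_cong_weighted_residue_counts[OF p] show ?thesis by (rule cong_trans)
qed

section \<open>Vanishing sums of \<open>p + q\<close> roots of unity of order \<open>pq\<close>\<close>

text \<open>Such a sum is a rotated regular \<open>p\<close>-gon plus a rotated regular \<open>q\<close>-gon.\<close>

lemma vanishing_sum_structure:
  assumes p: "prime p" and q: "prime q" and "p \<noteq> q" and N: "N = p + q"
    and vanish: "(\<Sum>t<N. unity_root (p * q) (e t)) = 0"
  obtains x0 y0 where
    "\<And>x. \<not> [x = x0] (mod int p) \<Longrightarrow> card {t. t < N \<and> [e t = x] (mod int p)} = 1"
    "card {t. t < N \<and> [e t = x0] (mod int p)} = q + 1"
    "\<And>y. \<not> [y = y0] (mod int q) \<Longrightarrow> card {t. t < N \<and> [e t = y] (mod int q)} = 1"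
    "\<And>t. t < N \<Longrightarrow> \<not> [e t = y0] (mod int q) \<Longrightarrow> [e t = x0] (mod int p)"
proof -
  have p2: "p \<ge> 2" "q \<ge> 2" using p q prime_ge_2_nat by auto
  have cop: "coprime (int p) (int q)" using assms by (simp add: primes_coprime)
  define C where "C d x = int (card {t. t < N \<and> [e t = x] (mod int d)})" for d x
  have count: "int (p * q) * C (p * q) s + int N = int q * C q s + int p * C p s" for s
    using vanishing_sum_count_identity[OF assms(1-3) vanish] by (simp add: C_def)
  have "int p * (C p x - 1) = int q * (int p * C (p * q) x + 1 - C q x)" for x
    using count[of x] N by (simp add: algebra_simps)
  then have Cp: "[C p x = 1] (mod int q)" for x
    using cop by (metis coprime_commute coprime_dvd_mult_right_iff dvd_triv_left cong_iff_dvd_diff)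
  obtain x0 where x0: "card {t. t < N \<and> [e t = x0] (mod int p)} = q + 1"
    and x0_others: "\<And>x. \<not> [x = x0] (mod int p) \<Longrightarrow> card {t. t < N \<and> [e t = x] (mod int p)} = 1"
    by (rule residue_counts_single_excess[of p q N e]) (use Cp[unfolded C_def] p2 N in simp_all)
  have "int q * (C q y - 1) = int p * (int q * C (p * q) y + 1 - C p y)" for y
    using count[of y] N by (simp add: algebra_simps)
  then have Cq: "[C q y = 1] (mod int p)" for y
    using cop by (metis coprime_dvd_mult_right_iff dvd_triv_left cong_iff_dvd_diff)
  obtain y0 where "card {t. t < N \<and> [e t = y0] (mod int q)} = p + 1"
    and y0_others: "\<And>y. \<not> [y = y0] (mod int q) \<Longrightarrow> card {t. t < N \<and> [e t = y] (mod int q)} = 1"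
    by (rule residue_counts_single_excess[of q p N e]) (use Cq[unfolded C_def] p2 N in simp_all)
  have "[e t = x0] (mod int p)" if t: "t < N" "\<not> [e t = y0] (mod int q)" for t
  proof (rule ccontr)
    assume "\<not> [e t = x0] (mod int p)"
    then have "C p (e t) = 1" using x0_others by (simp add: C_def)
    moreover have "C q (e t) = 1" using t(2) y0_others by (simp add: C_def)
    moreover have "C (p * q) (e t) \<ge> 1"
      using t(1) by (auto simp: C_def Suc_le_eq card_gt_0_iff intro!: exI[of _ t])
    ultimately show False
      using count[of "e t"] N p2 by (simp add: algebra_simps)
  qed
  then show ?thesis
    using that[OF x0_others x0 y0_others] by blast
qed

section \<open>The partition attached to a pair of rows\<close>

lemma Lij_cong: "d dvd p * q \<Longrightarrow> [Lij p q m i j t = m j t - m i t] (mod int d)"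
  unfolding Lij_def cong_def by (simp add: mod_mod_cancel flip: of_nat_mult)

lemma chinese_remainder_range:
  fixes a b :: nat and u v :: int
  assumes "coprime a b" "a > 0" "b > 0"
  shows "\<exists>x\<in>{0..<int (a * b)}. [x = u] (mod int a) \<and> [x = v] (mod int b)"
proof -
  obtain x where x: "[x = u] (mod int a)" "[x = v] (mod int b)"
    using binary_chinese_remainder_int[of "int a" "int b"] assms(1) by auto
  have "[x mod int (a * b) = x] (mod int a)" "[x mod int (a * b) = x] (mod int b)"
    by (simp_all add: cong_def mod_mod_cancel flip: of_nat_mult)
  then show ?thesis
    using x assms(2,3) by (intro bexI[of _ "x mod int (a * b)"]) (auto intro: cong_trans)
qed

lemma chinese_remainder_unique_range:
  fixes a b :: nat and x y :: int
  assumes "coprime a b" "x \<in> {0..<int (a * b)}" "y \<in> {0..<int (a * b)}"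
    and "[x = y] (mod int a)" "[x = y] (mod int b)"
  shows "x = y"
proof -
  have "[x = y] (mod int a * int b)"
    using assms(1,4,5) by (intro coprime_cong_mult) simp_all
  then show ?thesis using assms(2,3) by (simp add: cong_def flip: of_nat_mult)
qed

lemma punctured_coset_residues:
  fixes L :: "nat \<Rightarrow> int" and a b :: nat
  assumes a: "prime a" and b: "prime b" and "a \<noteq> b" and "finite X" and "card X = a - 1"
    and r: "r \<in> {0..<int (a * b)}"
    and image: "L ` X = {x \<in> {0..<int (a * b)}. x mod int b = r mod int b} - {r}"
  shows "t \<in> X \<Longrightarrow> [L t = r] (mod int b)"
    and "bij_betw (\<lambda>t. L t mod int a) X ({0..<int a} - {r mod int a})"
proof -
  have cop: "coprime a b" using assms by (simp add: primes_coprime)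
  have a2: "a \<ge> 2" "b \<ge> 2" using a b prime_ge_2_nat by auto
  show "[L t = r] (mod int b)" if "t \<in> X" for t
    using that image by (auto simp: cong_def)
  have "L t mod int a \<noteq> r mod int a" if "t \<in> X" for t
    using chinese_remainder_unique_range[OF cop _ r, of "L t"] that image
    by (auto simp: cong_def)
  then have "(\<lambda>t. L t mod int a) ` X \<subseteq> {0..<int a} - {r mod int a}"
    using a2 by auto
  moreover have "{0..<int a} - {r mod int a} \<subseteq> (\<lambda>t. L t mod int a) ` X"
  proof
    fix v assume v: "v \<in> {0..<int a} - {r mod int a}"
    then obtain x where "x \<in> {0..<int (a * b)}" "[x = v] (mod int a)" "[x = r] (mod int b)"
      using chinese_remainder_range[OF cop] a2 by fastforce
    moreover from this have "x mod int a = v" using v by (simp add: cong_def)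
    ultimately have "x \<in> L ` X" using image v by (auto simp: cong_def)
    then show "v \<in> (\<lambda>t. L t mod int a) ` X" using \<open>x mod int a = v\<close> by force
  qed
  ultimately have "(\<lambda>t. L t mod int a) ` X = {0..<int a} - {r mod int a}" by blast
  moreover from this have "inj_on (\<lambda>t. L t mod int a) X"
    using assms(4,5) a2 by (intro eq_card_imp_inj_on) simp_all
  ultimately show "bij_betw (\<lambda>t. L t mod int a) X ({0..<int a} - {r mod int a})"
    by (simp add: bij_betw_def)
qed

locale PQR_partition =
  fixes p q N :: nat and m :: "nat \<Rightarrow> nat \<Rightarrow> int" and i j :: nat
    and P Q R :: "nat set" and r :: int
  assumes p: "prime p" and q: "prime q" and distinct: "p \<noteq> q"
    and PQR: "is_PQR p q N m i j P Q R r"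
begin

lemma partition: "P \<union> Q \<union> R = {..<N}" "P \<inter> Q = {}" "P \<inter> R = {}" "Q \<inter> R = {}"
  and card: "card P = p - 1" "card Q = q - 1" "card R = 2"
  using PQR by (simp_all add: is_PQR_def)

lemma finite: "finite P" "finite Q" "finite R"
  using partition(1) finite_subset[of _ "{..<N}"] by blast+

lemma R_cong:
  assumes "t \<in> R"
  shows R_cong_p: "[m j t - m i t = r] (mod int p)" and R_cong_q: "[m j t - m i t = r] (mod int q)"
  using assms PQR Lij_cong[of p p q m i j t] Lij_cong[of q p q m i j t]
  by (auto simp: is_PQR_def intro: cong_sym cong_trans)

lemma P_residues:
  shows P_cong: "t \<in> P \<Longrightarrow> [m j t - m i t = r] (mod int q)"
    and P_bij: "bij_betw (\<lambda>t. (m j t - m i t) mod int p) P ({0..<int p} - {r mod int p})"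
proof -
  have "(m j t - m i t) mod int p = Lij p q m i j t mod int p" for t
    using Lij_cong[of p p q m i j t] by (simp add: cong_def)
  moreover have "[m j t - m i t = Lij p q m i j t] (mod int q)" for t
    using Lij_cong[of q p q m i j t] by (simp add: cong_sym)
  moreover note punctured_coset_residues[OF p q distinct finite(1) card(1), of r "Lij p q m i j"]
  ultimately show "t \<in> P \<Longrightarrow> [m j t - m i t = r] (mod int q)"
    and "bij_betw (\<lambda>t. (m j t - m i t) mod int p) P ({0..<int p} - {r mod int p})"
    using PQR by (auto simp: is_PQR_def intro: cong_trans)
qed

lemma Q_residues:
  shows Q_cong: "t \<in> Q \<Longrightarrow> [m j t - m i t = r] (mod int p)"
    and Q_bij: "bij_betw (\<lambda>t. (m j t - m i t) mod int q) Q ({0..<int q} - {r mod int q})"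
proof -
  have "(m j t - m i t) mod int q = Lij p q m i j t mod int q" for t
    using Lij_cong[of q p q m i j t] by (simp add: cong_def)
  moreover have "[m j t - m i t = Lij p q m i j t] (mod int p)" for t
    using Lij_cong[of p p q m i j t] by (simp add: cong_sym)
  moreover note punctured_coset_residues[OF q p distinct[symmetric] finite(2) card(2), of r "Lij p q m i j"]
  ultimately show "t \<in> Q \<Longrightarrow> [m j t - m i t = r] (mod int p)"
    and "bij_betw (\<lambda>t. (m j t - m i t) mod int q) Q ({0..<int q} - {r mod int q})"
    using PQR by (auto simp: is_PQR_def mult.commute intro: cong_trans)
qed

lemma P_not_cong: "t \<in> P \<Longrightarrow> \<not> [m j t - m i t = r] (mod int p)"
  using bij_betw_apply[OF P_bij] by (auto simp: cong_def)

lemma Q_not_cong: "t \<in> Q \<Longrightarrow> \<not> [m j t - m i t = r] (mod int q)"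
  using bij_betw_apply[OF Q_bij] by (auto simp: cong_def)

lemma Q_cong_inj: "t \<in> Q \<Longrightarrow> t' \<in> Q \<Longrightarrow> [m j t - m i t = m j t' - m i t'] (mod int q) \<Longrightarrow> t = t'"
  using bij_betw_imp_inj_on[OF Q_bij] by (auto simp: cong_def dest: inj_onD)

lemma residue_class_r_p: "{t. t < N \<and> [m j t - m i t = r] (mod int p)} = Q \<union> R"
  using partition(1) P_not_cong Q_cong R_cong_p by blast

lemma card_residue_class_p:
  "card {t. t < N \<and> [m j t - m i t = x] (mod int p)} = (if [x = r] (mod int p) then q + 1 else 1)"
proof (cases "[x = r] (mod int p)")
  case True
  then have "{t. t < N \<and> [m j t - m i t = x] (mod int p)} = Q \<union> R"
    using residue_count_cong[OF True, of N "\<lambda>t. m j t - m i t"] residue_class_r_p by simp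
  then show ?thesis
    using True finite card partition(4) prime_ge_2_nat[OF q] by (simp add: card_Un_disjoint)
next
  case False
  have "x mod int p \<in> {0..<int p} - {r mod int p}"
    using False p prime_gt_0_nat by (simp add: cong_def)
  then have "x mod int p \<in> (\<lambda>t. (m j t - m i t) mod int p) ` P"
    by (simp only: bij_betw_imp_surj_on[OF P_bij])
  then obtain t0 where t0: "t0 \<in> P" "(m j t0 - m i t0) mod int p = x mod int p"
    by auto
  have "{t. t < N \<and> [m j t - m i t = x] (mod int p)} = {t0}"
  proof (intro set_eqI iffI)
    fix t assume t: "t \<in> {t. t < N \<and> [m j t - m i t = x] (mod int p)}"
    then have "t \<notin> Q \<union> R"
      using residue_class_r_p False by (auto intro: cong_trans[OF cong_sym])
    then have "t \<in> P" using t partition(1) by auto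
    moreover have "(m j t - m i t) mod int p = (m j t0 - m i t0) mod int p"
      using t t0(2) by (simp add: cong_def)
    ultimately show "t \<in> {t0}"
      using t0(1) inj_onD[OF bij_betw_imp_inj_on[OF P_bij]] by blast
  qed (use t0 partition(1) in \<open>auto simp: cong_def\<close>)
  then show ?thesis using False by simp
qed

lemma sum_cong: "odd p \<Longrightarrow> [(\<Sum>t<N. m j t - m i t) = int q * r] (mod int p)"
  by (rule sum_cong_of_residue_counts) (simp_all add: card_residue_class_p)

end

text \<open>Here \<open>y0\<close> is the residue modulo \<open>q\<close> of the \<open>p\<close>-gon in the vanishing sum of \<open>L\<^sub>i\<^sub>k = L\<^sub>i\<^sub>j + L\<^sub>j\<^sub>k\<close>,
  and the residue modulo \<open>p\<close> of its \<open>q\<close>-gon has already been identified as \<open>rij + rjk\<close>.\<close>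

locale PQR_triangle =
  ij: PQR_partition p q N m i j Pij Qij Rij rij + jk: PQR_partition p q N m j k Pjk Qjk Rjk rjk
  for p q N m i j k Pij Qij Rij rij Pjk Qjk Rjk rjk +
  fixes y0 :: int
  assumes off_y0: "t < N \<Longrightarrow> \<not> [m k t - m i t = y0] (mod int q) \<Longrightarrow> [m k t - m i t = rij + rjk] (mod int p)"
    and sparse: "\<not> [y = y0] (mod int q) \<Longrightarrow> card {t. t < N \<and> [m k t - m i t = y] (mod int q)} \<le> 1"
begin

lemma ik_split: "m k t - m i t = (m j t - m i t) + (m k t - m j t)"
  by simp

lemma in_Qjk_off_y0_not_Pij:
  assumes "t \<in> Qjk" "\<not> [m k t - m i t = y0] (mod int q)"
  shows "t \<notin> Pij"
proof
  assume "t \<in> Pij"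
  have "t < N" using assms(1) jk.partition(1) by blast
  then have "[(m j t - m i t) + (m k t - m j t) = rij + rjk] (mod int p)"
    using off_y0 assms(2) by (simp only: ik_split)
  then have "[m j t - m i t = rij] (mod int p)"
    using cong_add_cancel_right_iff[OF jk.Q_cong[OF assms(1)]] by blast
  with ij.P_not_cong[OF \<open>t \<in> Pij\<close>] show False ..
qed

lemma Pij_Qjk_disjoint:
  assumes "[y0 = rij + rjk] (mod int q)"
  shows "Pij \<inter> Qjk = {}"
proof (intro equals0I)
  fix t assume t: "t \<in> Pij \<inter> Qjk"
  then have "\<not> [(m j t - m i t) + (m k t - m j t) = rij + rjk] (mod int q)"
    using cong_add_cancel_left_iff[OF ij.P_cong] jk.Q_not_cong by blast
  then have "\<not> [m k t - m i t = y0] (mod int q)"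
    using assms cong_trans ik_split by metis
  then show False using in_Qjk_off_y0_not_Pij t by blast
qed

lemma card_Pij_Qjk_residue_class_le_1:
  "card {t \<in> Pij \<inter> Qjk. [m k t - m i t = y] (mod int q)} \<le> 1"
proof -
  let ?S = "{t \<in> Pij \<inter> Qjk. [m k t - m i t = y] (mod int q)}"
  have "t = t'" if t: "t \<in> ?S" "t' \<in> ?S" for t t'
  proof -
    have "[m k t - m i t = y] (mod int q)" "[m k t' - m i t' = y] (mod int q)"
      using t by simp_all
    then have "[(m j t - m i t) + (m k t - m j t) = (m j t' - m i t') + (m k t' - m j t')] (mod int q)"
      unfolding ik_split[symmetric] by (rule cong_trans[OF _ cong_sym])
    moreover have "[m j t - m i t = rij] (mod int q)" "[m j t' - m i t' = rij] (mod int q)"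
      using t ij.P_cong by simp_all
    then have "[m j t - m i t = m j t' - m i t'] (mod int q)"
      by (rule cong_trans[OF _ cong_sym])
    ultimately have "[m k t - m j t = m k t' - m j t'] (mod int q)"
      using cong_add_cancel_left_iff by blast
    then show "t = t'" using jk.Q_cong_inj t by simp
  qed
  moreover have "finite ?S" using jk.finite(2) by simp
  ultimately have "card ?S \<le> Suc 0" using card_le_Suc0_iff_eq by blast
  then show ?thesis by simp
qed

lemma card_Pij_Rij_le_4:
  assumes "\<not> [y0 = rij + rjk] (mod int q)"
  shows "card (Pij \<union> Rij) \<le> 4"
proof -
  define S1 where "S1 = {t. t < N \<and> [m k t - m i t = rij + rjk] (mod int q)}"
  define S2 where "S2 = {t \<in> Pij \<inter> Qjk. [m k t - m i t = y0] (mod int q)}"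
  have "card S1 \<le> 1"
    using sparse[of "rij + rjk"] assms by (simp add: S1_def cong_sym_eq)
  have "Pij \<union> Rij \<subseteq> S1 \<union> S2 \<union> Rij"
  proof
    fix t assume t: "t \<in> Pij \<union> Rij"
    then have "t < N" using ij.partition(1) by blast
    show "t \<in> S1 \<union> S2 \<union> Rij"
    proof (cases "t \<in> Qjk")
      case False
      then have "t \<in> Pjk \<union> Rjk" using \<open>t < N\<close> jk.partition(1) by blast
      then have "[m k t - m j t = rjk] (mod int q)" using jk.P_cong jk.R_cong_q by blast
      moreover have "[m j t - m i t = rij] (mod int q)" using t ij.P_cong ij.R_cong_q by blast
      ultimately have "[(m j t - m i t) + (m k t - m j t) = rij + rjk] (mod int q)"
        using cong_add_cancel_left_iff by blast
      then have "t \<in> S1" using \<open>t < N\<close> by (simp only: S1_def ik_split mem_Collect_eq)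
      then show ?thesis by blast
    next
      case True
      then show ?thesis using t in_Qjk_off_y0_not_Pij[OF True] by (auto simp: S2_def)
    qed
  qed
  then have "card (Pij \<union> Rij) \<le> card (S1 \<union> S2 \<union> Rij)"
    by (intro card_mono) (simp_all add: S1_def S2_def jk.finite ij.finite)
  also have "\<dots> \<le> card S1 + card S2 + card Rij"
    using card_Un_le[of S1 S2] card_Un_le[of "S1 \<union> S2" Rij] by linarith
  finally show ?thesis
    using \<open>card S1 \<le> 1\<close> card_Pij_Qjk_residue_class_le_1[of y0] ij.card(3) by (simp add: S2_def)
qed

lemma card_Pij_inter_Pjk:
  assumes "p \<ge> 5"
  shows "card (Pij \<inter> Pjk) \<ge> 2"
proof (cases "[y0 = rij + rjk] (mod int q)")
  case True
  then have "Pij \<subseteq> (Pij \<inter> Pjk) \<union> Rjk"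
    using Pij_Qjk_disjoint ij.partition(1) jk.partition(1) by blast
  then have "card Pij \<le> card ((Pij \<inter> Pjk) \<union> Rjk)"
    using ij.finite(1) jk.finite(3) by (intro card_mono) simp_all
  also have "\<dots> \<le> card (Pij \<inter> Pjk) + card Rjk" by (rule card_Un_le)
  finally have "card Pij \<le> card (Pij \<inter> Pjk) + card Rjk" .
  then show ?thesis using assms ij.card(1) jk.card(3) by linarith
next
  case False
  then have "card (Pij \<union> Rij) \<le> 4" by (rule card_Pij_Rij_le_4)
  moreover have "card (Pij \<union> Rij) = p + 1"
    using ij.finite ij.card ij.partition(3) assms by (simp add: card_Un_disjoint)
  ultimately show ?thesis using assms by linarith
qed

end

lemma hadamard_exp_vanishing_sum:
  assumes "hadamard_exp p q N m" "i < N" "k < N" "i \<noteq> k"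
  shows "(\<Sum>t<N. unity_root (p * q) (m k t - m i t)) = 0"
  using assms by (simp add: hadamard_exp_def unity_root_def)

theorem lemma6p4:
  fixes p q N :: nat and m :: "nat \<Rightarrow> nat \<Rightarrow> int"
  assumes "prime p" and "prime q" and "p \<noteq> q" and "N = p + q"
    and "hadamard_exp p q N m"
    and "p \<ge> 5"
    and "i < N" and "j < N" and "k < N"
    and "i \<noteq> j" and "j \<noteq> k" and "i \<noteq> k"
    and "is_PQR p q N m i j Pij Qij Rij rij"
    and "is_PQR p q N m j k Pjk Qjk Rjk rjk"
  shows "card (Pij \<inter> Pjk) \<ge> 2"
proof -
  interpret ij: PQR_partition p q N m i j Pij Qij Rij rij using assms by unfold_locales
  interpret jk: PQR_partition p q N m j k Pjk Qjk Rjk rjk using assms by unfold_locales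
  have "odd p" using assms(1,6) prime_odd_nat by simp
  have "(\<Sum>t<N. unity_root (p * q) (m k t - m i t)) = 0"
    using assms(5,7,9,12) by (rule hadamard_exp_vanishing_sum)
  then obtain x0 y0 where
        x0_others: "\<And>x. \<not> [x = x0] (mod int p) \<Longrightarrow> card {t. t < N \<and> [m k t - m i t = x] (mod int p)} = 1"
    and x0_count: "card {t. t < N \<and> [m k t - m i t = x0] (mod int p)} = q + 1"
    and y0_others: "\<And>y. \<not> [y = y0] (mod int q) \<Longrightarrow> card {t. t < N \<and> [m k t - m i t = y] (mod int q)} = 1"
    and off_y0: "\<And>t. t < N \<Longrightarrow> \<not> [m k t - m i t = y0] (mod int q) \<Longrightarrow> [m k t - m i t = x0] (mod int p)"
    by (rule vanishing_sum_structure[OF assms(1-4)]) blast+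
  have "[int q * x0 = (\<Sum>t<N. m k t - m i t)] (mod int p)"
    using sum_cong_of_residue_counts[OF \<open>odd p\<close> x0_others x0_count] by (simp add: cong_sym_eq)
  also have "(\<Sum>t<N. m k t - m i t) = (\<Sum>t<N. m j t - m i t) + (\<Sum>t<N. m k t - m j t)"
    by (simp flip: sum.distrib)
  also have "[\<dots> = int q * (rij + rjk)] (mod int p)"
    unfolding distrib_left using \<open>odd p\<close> by (intro cong_add ij.sum_cong jk.sum_cong)
  finally have "[x0 = rij + rjk] (mod int p)"
    using assms(1-3) by (simp add: cong_mult_lcancel primes_coprime coprime_commute)
  then interpret PQR_triangle p q N m i j k Pij Qij Rij rij Pjk Qjk Rjk rjk y0
    using off_y0 y0_others by unfold_locales (auto intro: cong_trans)
  show ?thesis using assms(6) by (rule card_Pij_inter_Pjk)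
qed

end
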